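(* There exists a deterministic distributed algorithm with advice (an oracle together with an algorithm) that solves Selection in every anonymous port-labeled graph $G$ whose Selection index $\psi_S(G)$ is finite, using exactly $\psi_S(G)$ communication rounds and advice of size $O((\Delta-1)^{\psi_S(G)}\log \Delta)$, where $\Delta$ is the maximum degree of $G$.
   Context: Networks are simple undirected connected graphs without node identifiers; at each node of degree $d$ incident edges have distinct local port numbers $0,\dots,d-1$. Communication is in the synchronous LOCAL model (all nodes start together; each round every node exchanges arbitrary messages with all neighbors); initially a node knows only its degree. In the advice model, an oracle knowing the whole port-labeled graph $G$ gives the same binary string to all nodes at the start; its length is the size of advice. Selection: exactly one node outputs "leader" and all others output "non-leader". The Selection index $\psi_S(G)$ is the minimum number of rounds in which Selection can be solved on $G$ by a deterministic algorithm when every node knows the complete map of $G$ (an isomorphic copy with all port numbers); it is finite iff the views of all nodes are distinct, where the view of $v$ is the infinite tree of all finite paths from $v$ coded by their port-number sequences. *)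

theory Defs
  imports Complex_Main
begin

text \<open>Nodes are 0,...,nv G - 1 (the names are invisible to algorithms).
  deg G v is the degree of v, and nbr G v p is the neighbour reached from v
  through its local port p (for p < deg G v).\<close>

record pgraph =
  nv  :: nat
  deg :: "nat \<Rightarrow> nat"
  nbr :: "nat \<Rightarrow> nat \<Rightarrow> nat"

definition pg_edges :: "pgraph \<Rightarrow> (nat \<times> nat) set" where
  "pg_edges G = {(v, nbr G v p) | v p. v < nv G \<and> p < deg G v}"

definition wf_pgraph :: "pgraph \<Rightarrow> bool" where
  "wf_pgraph G \<longleftrightarrow>
     nv G \<ge> 1
   \<and> (\<forall>v < nv G. \<forall>p < deg G v. nbr G v p < nv G \<and> nbr G v p \<noteq> v)
   \<and> (\<forall>v < nv G. inj_on (nbr G v) {..<deg G v})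
   \<and> (\<forall>v < nv G. \<forall>p < deg G v. \<exists>q < deg G (nbr G v p). nbr G (nbr G v p) q = v)
   \<and> (\<forall>u < nv G. \<forall>w < nv G. (u, w) \<in> (pg_edges G)\<^sup>*)"

definition rport :: "pgraph \<Rightarrow> nat \<Rightarrow> nat \<Rightarrow> nat" where
  "rport G v p = (THE q. q < deg G (nbr G v p) \<and> nbr G (nbr G v p) q = v)"

definition maxdeg :: "pgraph \<Rightarrow> nat" where
  "maxdeg G = Max (deg G ` {..<nv G})"

text \<open>Local states and messages are natural numbers (w.l.o.g., by encoding;
  all relevant information, e.g. truncated views, is countable).
  a_init advice d: initial state of a node of degree d that received the advice;
  a_send s p: message sent through port p in state s;
  a_upd s m: new state, m p being the message received through port p;
  a_out s: output in state s (None = not yet decided, Some True = leader,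
  Some False = non-leader).\<close>

record alg =
  a_init :: "bool list \<Rightarrow> nat \<Rightarrow> nat"
  a_send :: "nat \<Rightarrow> nat \<Rightarrow> nat"
  a_upd  :: "nat \<Rightarrow> (nat \<Rightarrow> nat) \<Rightarrow> nat"
  a_out  :: "nat \<Rightarrow> bool option"

primrec exec :: "pgraph \<Rightarrow> alg \<Rightarrow> bool list \<Rightarrow> nat \<Rightarrow> nat \<Rightarrow> nat" where
  "exec G A a 0 v = a_init A a (deg G v)"
| "exec G A a (Suc t) v =
     a_upd A (exec G A a t v)
       (\<lambda>p. if p < deg G v then a_send A (exec G A a t (nbr G v p)) (rport G v p) else 0)"

definition solves_sel_in :: "pgraph \<Rightarrow> alg \<Rightarrow> bool list \<Rightarrow> nat \<Rightarrow> bool" where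
  "solves_sel_in G A a T \<longleftrightarrow>
     (\<forall>v < nv G. a_out A (exec G A a T v) \<noteq> None)
   \<and> (\<forall>v < nv G. \<forall>t s. t \<le> s \<longrightarrow> a_out A (exec G A a t v) \<noteq> None
          \<longrightarrow> a_out A (exec G A a s v) = a_out A (exec G A a t v))
   \<and> (\<exists>!v. v < nv G \<and> a_out A (exec G A a T v) = Some True)"

text \<open>A algorithm dedicated to G (i.e. whose nodes know the map of G) solves
  Selection on G in T rounds.\<close>
definition sel_solvable :: "pgraph \<Rightarrow> nat \<Rightarrow> bool" where
  "sel_solvable G T \<longleftrightarrow> (\<exists>A. solves_sel_in G A [] T)"

text \<open>Selection index (meaningful when finite, i.e. when some T works).\<close>
definition sel_index :: "pgraph \<Rightarrow> nat" where
  "sel_index G = (LEAST T. sel_solvable G T)"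

end

theory Submission
  imports Defs "HOL-Library.Countable" "HOL-Library.Log_Nat"
begin

(* A node's state after T rounds of any algorithm is a function of its view of depth T, so
   Selection is solvable in T rounds on a known map exactly when some node has a unique view of
   depth T; and an advice algorithm solving Selection in T rounds becomes a dedicated one once its
   advice is fixed, so no advice beats psi_S(G) rounds.  Conversely, the oracle sends
   psi = psi_S(G), Delta and the index of the leader's depth-psi view among all candidate trees;
   in psi rounds every node gathers its own view and compares.  To make the advice short we use
   non-backtracking views, which never walk back along the edge just traversed: labelling each
   child by the port number at its end, they still determine the full view, yet every node below
   the root has at most Delta - 1 children.  Hence there are only Delta^O((Delta-1)^psi) candidate
   trees and the index has O((Delta-1)^psi log Delta) bits. *)

lemma
  assumes "wf_pgraph G" "v < nv G"
  shows wf_pgraph_nbr_less: "p < deg G v \<Longrightarrow> nbr G v p < nv G"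
    and wf_pgraph_inj_nbr: "inj_on (nbr G v) {..<deg G v}"
    and wf_pgraph_nbr_back: "p < deg G v \<Longrightarrow> \<exists>q < deg G (nbr G v p). nbr G (nbr G v p) q = v"
  using assms unfolding wf_pgraph_def by blast+

lemma rport_eqI:
  assumes G: "wf_pgraph G" and v: "v < nv G" and p: "p < deg G v"
    and q: "q < deg G (nbr G v p)" "nbr G (nbr G v p) q = v"
  shows "rport G v p = q"
  unfolding rport_def
proof (rule the_equality)
  show "q < deg G (nbr G v p) \<and> nbr G (nbr G v p) q = v"
    using q by simp
next
  fix q'
  assume "q' < deg G (nbr G v p) \<and> nbr G (nbr G v p) q' = v"
  then show "q' = q"
    using q inj_onD[OF wf_pgraph_inj_nbr[OF G wf_pgraph_nbr_less[OF G v p]]] by simp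
qed

lemma
  assumes G: "wf_pgraph G" and v: "v < nv G" and p: "p < deg G v"
  shows rport_less: "rport G v p < deg G (nbr G v p)"
    and nbr_rport: "nbr G (nbr G v p) (rport G v p) = v"
    and rport_rport: "rport G (nbr G v p) (rport G v p) = p"
proof -
  let ?w = "nbr G v p"
  obtain q where q: "q < deg G ?w" "nbr G ?w q = v"
    using wf_pgraph_nbr_back[OF G v p] by blast
  moreover have "rport G v p = q"
    using rport_eqI[OF G v p q] .
  ultimately show "rport G v p < deg G ?w" "nbr G ?w (rport G v p) = v"
    by simp_all
  show "rport G ?w (rport G v p) = p"
    using rport_eqI[OF G wf_pgraph_nbr_less[OF G v p]] \<open>rport G v p = q\<close> q p by simp
qed

lemma deg_le_maxdeg: "v < nv G \<Longrightarrow> deg G v \<le> maxdeg G"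
  unfolding maxdeg_def by (rule Max_ge) simp_all


section \<open>Non-backtracking views\<close>

datatype vtree = Node (vdeg: nat) (vport: nat) "(nat \<times> vtree) list"

instance vtree :: countable by countable_datatype

(* The view at u of depth t, entered through port r, which is never walked back; r = deg G u
   excludes no port.  Each child is labelled with the port number at its end. *)
primrec nbview :: "pgraph \<Rightarrow> nat \<Rightarrow> nat \<Rightarrow> nat \<Rightarrow> vtree" where
  "nbview G 0 u r = Node (deg G u) r []"
| "nbview G (Suc t) u r = Node (deg G u) r
     (map (\<lambda>q. (rport G u q, nbview G t (nbr G u q) (rport G u q))) [q \<leftarrow> [0..<deg G u]. q \<noteq> r])"

abbreviation view :: "pgraph \<Rightarrow> nat \<Rightarrow> nat \<Rightarrow> vtree" where
  "view G t u \<equiv> nbview G t u (deg G u)"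

fun restrict_view :: "nat \<Rightarrow> vtree \<Rightarrow> vtree" where
  "restrict_view p (Node d r cs) = Node d p (map ((!) cs) [q \<leftarrow> [0..<length cs]. q \<noteq> p])"

lemma restrict_view: "restrict_view r (view G t u) = nbview G t u r"
  by (cases t) simp_all

lemma vdeg_nbview [simp]: "vdeg (nbview G t u r) = deg G u"
  by (cases t) simp_all

lemma vport_nbview [simp]: "vport (nbview G t u r) = r"
  by (cases t) simp_all

lemma view_Suc:
  "view G (Suc t) u = Node (deg G u) (deg G u)
     (map (\<lambda>q. (rport G u q, nbview G t (nbr G u q) (rport G u q))) [0..<deg G u])"
  by simp

lemma nbview_Suc_eq_iff:
  "nbview G (Suc t) u r = nbview G (Suc t) u' r' \<longleftrightarrow>
     deg G u = deg G u' \<and> r = r' \<and> (\<forall>q < deg G u. q \<noteq> r \<longrightarrow>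
       rport G u q = rport G u' q \<and>
       nbview G t (nbr G u q) (rport G u q) = nbview G t (nbr G u' q) (rport G u' q))"
  by auto (metis (no_types))+

lemma nbview_eq_Suc_imp_eq:
  "nbview G (Suc t) u r = nbview G (Suc t) u' r' \<Longrightarrow> nbview G t u r = nbview G t u' r'"
proof (induction t arbitrary: u r u' r')
  case (Suc t)
  then show ?case unfolding nbview_Suc_eq_iff by blast
qed simp

lemma nbview_eq_imp_eq_le:
  assumes "nbview G t u r = nbview G t u' r'" and "s \<le> t"
  shows "nbview G s u r = nbview G s u' r'"
  using assms(2,1) by (induction s rule: inc_induct) (blast dest: nbview_eq_Suc_imp_eq)+

lemma view_eq_imp_nbview_eq:
  "view G t u = view G t u' \<Longrightarrow> nbview G t u r = nbview G t u' r"
  by (metis restrict_view)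

lemma view_eq_imp_view_nbr_eq:
  assumes G: "wf_pgraph G" and u: "u < nv G" "u' < nv G" and p: "p < deg G u"
    and eq: "view G (Suc t) u = view G (Suc t) u'"
  shows "view G t (nbr G u p) = view G t (nbr G u' p)"
proof -
  \<comment> \<open>The neighbour's full view is its view entered from u plus the branch back to u, which
    is u's own view of smaller depth.\<close>
  let ?w = "nbr G u p" and ?w' = "nbr G u' p" and ?r = "rport G u p"
  have deg: "deg G u = deg G u'"
    and "\<forall>q < deg G u. q \<noteq> deg G u \<longrightarrow> rport G u q = rport G u' q \<and>
      nbview G t (nbr G u q) (rport G u q) = nbview G t (nbr G u' q) (rport G u' q)"
    using eq unfolding nbview_Suc_eq_iff by blast+
  then have r: "rport G u' p = ?r" and sub: "nbview G t ?w ?r = nbview G t ?w' ?r"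
    using p by auto
  show ?thesis
  proof (cases t)
    case 0
    then show ?thesis using sub by simp
  next
    case (Suc s)
    have p': "p < deg G u'" using p deg by simp
    have return: "rport G ?w ?r = p" "rport G ?w' ?r = p" "nbr G ?w ?r = u" "nbr G ?w' ?r = u'"
      using rport_rport[OF G u(1) p] nbr_rport[OF G u(1) p]
        rport_rport[OF G u(2) p'] nbr_rport[OF G u(2) p'] r by simp_all
    have "view G s u = view G s u'"
      using nbview_eq_imp_eq_le[OF eq, of s] Suc by simp
    then have at_r:
      "nbview G s (nbr G ?w ?r) (rport G ?w ?r) = nbview G s (nbr G ?w' ?r) (rport G ?w' ?r)"
      unfolding return by (rule view_eq_imp_nbview_eq)
    have deg_w: "deg G ?w = deg G ?w'"
      and off_r: "\<forall>q < deg G ?w. q \<noteq> ?r \<longrightarrow> rport G ?w q = rport G ?w' q \<and>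
        nbview G s (nbr G ?w q) (rport G ?w q) = nbview G s (nbr G ?w' q) (rport G ?w' q)"
      using sub unfolding Suc nbview_Suc_eq_iff by blast+
    have "rport G ?w q = rport G ?w' q \<and>
        nbview G s (nbr G ?w q) (rport G ?w q) = nbview G s (nbr G ?w' q) (rport G ?w' q)"
      if "q < deg G ?w" for q
    proof (cases "q = ?r")
      case True
      then show ?thesis using return at_r by simp
    next
      case False
      then show ?thesis using off_r that by blast
    qed
    then show ?thesis
      unfolding Suc nbview_Suc_eq_iff using deg_w by blast
  qed
qed

lemma exec_eq_if_view_eq:
  assumes G: "wf_pgraph G"
  shows "u < nv G \<Longrightarrow> u' < nv G \<Longrightarrow> view G t u = view G t u' \<Longrightarrow>
    exec G A a t u = exec G A a t u'"
proof (induction t arbitrary: u u')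
  case (Suc t)
  have deg: "deg G u = deg G u'"
    using Suc.prems(3) by (metis vdeg_nbview)
  have state: "exec G A a t u = exec G A a t u'"
    using Suc nbview_eq_Suc_imp_eq by blast
  have port: "rport G u p = rport G u' p" if "p < deg G u" for p
    using Suc.prems(3) that unfolding nbview_Suc_eq_iff by simp
  have msg: "exec G A a t (nbr G u p) = exec G A a t (nbr G u' p)" if p: "p < deg G u" for p
  proof -
    have "nbr G u p < nv G" "nbr G u' p < nv G"
      using wf_pgraph_nbr_less[OF G] Suc.prems(1,2) p deg by auto
    then show ?thesis
      using Suc.IH view_eq_imp_view_nbr_eq[OF G Suc.prems(1,2) p Suc.prems(3)] by blast
  qed
  show ?case
    using deg state port msg by (simp cong: if_cong)
qed simp

lemma sel_solvable_imp_unique_view: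
  assumes G: "wf_pgraph G" and "sel_solvable G T"
  shows "\<exists>v0 < nv G. \<forall>v < nv G. view G T v = view G T v0 \<longrightarrow> v = v0"
proof -
  obtain A where "solves_sel_in G A [] T"
    using assms(2) unfolding sel_solvable_def by blast
  then obtain v0 where v0: "v0 < nv G" "a_out A (exec G A [] T v0) = Some True"
    and leader: "\<And>v. v < nv G \<Longrightarrow> a_out A (exec G A [] T v) = Some True \<Longrightarrow> v = v0"
    unfolding solves_sel_in_def by blast
  have "v = v0" if "v < nv G" "view G T v = view G T v0" for v
    using leader[OF that(1)] v0 exec_eq_if_view_eq[OF G that(1) v0(1) that(2)] by simp
  then show ?thesis
    using v0(1) by blast
qed

lemma exec_fixed_advice:
  "exec G (A\<lparr>a_init := \<lambda>_. a_init A a\<rparr>) b t v = exec G A a t v"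
proof (induction t arbitrary: v)
  case (Suc t)
  have "a_send (A\<lparr>a_init := \<lambda>_. a_init A a\<rparr>) = a_send A"
    and "a_upd (A\<lparr>a_init := \<lambda>_. a_init A a\<rparr>) = a_upd A"
    by (cases A; simp)+
  then show ?case
    using Suc by (simp cong: if_cong)
qed simp

lemma solves_sel_in_imp_sel_solvable: "solves_sel_in G A a T \<Longrightarrow> sel_solvable G T"
  unfolding sel_solvable_def solves_sel_in_def
  by (rule exI[of _ "A\<lparr>a_init := \<lambda>_. a_init A a\<rparr>"]) (simp add: exec_fixed_advice)

lemma not_solves_sel_in_below_sel_index:
  "T < sel_index G \<Longrightarrow> \<not> solves_sel_in G A a T"
  unfolding sel_index_def using not_less_Least solves_sel_in_imp_sel_solvable by blast

definition leader_view :: "pgraph \<Rightarrow> vtree" where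
  "leader_view G = (SOME x. \<exists>!v. v < nv G \<and> view G (sel_index G) v = x)"

lemma leader_view_unique:
  assumes G: "wf_pgraph G" and "\<exists>T. sel_solvable G T"
  shows "\<exists>!v. v < nv G \<and> view G (sel_index G) v = leader_view G"
proof -
  have "sel_solvable G (sel_index G)"
    using assms(2) unfolding sel_index_def by (rule LeastI_ex)
  then have "\<exists>x. \<exists>!v. v < nv G \<and> view G (sel_index G) v = x"
    using sel_solvable_imp_unique_view[OF G] by metis
  then show ?thesis
    unfolding leader_view_def by (rule someI_ex)
qed


section \<open>Gathering views\<close>

(* rounds to run, target view, rounds done, view gathered so far *)
type_synonym vstate = "nat \<times> vtree \<times> nat \<times> vtree"

(* Through port p a node sends its view with port p excluded, which is exactly the subtree the
   receiver files under that port. *)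
definition view_alg :: "(bool list \<Rightarrow> nat \<times> vtree) \<Rightarrow> alg" where
  "view_alg dec = \<lparr>
     a_init = \<lambda>a d. to_nat (fst (dec a), snd (dec a), 0::nat, Node d d []),
     a_send = \<lambda>s p. to_nat (restrict_view p (snd (snd (snd (from_nat s :: vstate))))),
     a_upd = \<lambda>s m. (case from_nat s :: vstate of (T, x, c, y) \<Rightarrow>
       if T \<le> c then s
       else to_nat (T, x, Suc c,
         Node (vdeg y) (vdeg y) (map (\<lambda>q. (vport (from_nat (m q)), from_nat (m q))) [0..<vdeg y]))),
     a_out = \<lambda>s. (case from_nat s :: vstate of (T, x, c, y) \<Rightarrow>
       if T \<le> c then Some (y = x) else None) \<rparr>"

lemma exec_view_alg:
  assumes "dec a = (T, x)"
  shows "exec G (view_alg dec) a t v = to_nat (T, x, min t T, view G (min t T) v)"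
proof (induction t arbitrary: v)
  case 0
  then show ?case using assms by (simp add: view_alg_def)
next
  case (Suc t)
  show ?case
  proof (cases "T \<le> t")
    case True
    then show ?thesis using Suc by (simp add: view_alg_def)
  next
    case False
    then show ?thesis using Suc by (simp add: view_alg_def restrict_view view_Suc)
  qed
qed

lemma a_out_exec_view_alg:
  assumes "dec a = (T, x)"
  shows "a_out (view_alg dec) (exec G (view_alg dec) a t v) =
    (if T \<le> t then Some (view G T v = x) else None)"
  using exec_view_alg[where dec = dec, OF assms] by (simp add: view_alg_def)

lemma solves_sel_in_view_alg:
  assumes "dec a = (T, x)" and "\<exists>!v. v < nv G \<and> view G T v = x"
  shows "solves_sel_in G (view_alg dec) a T"
  using assms(2) unfolding solves_sel_in_def a_out_exec_view_alg[where dec = dec, OF assms(1)]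
  by auto


section \<open>Counting views\<close>

(* Candidate views of depth t with degrees and ports at most D and at most n children at the
   root; below the root there are at most D - 1 children, the source of the factor (D - 1)^t. *)
fun views :: "nat \<Rightarrow> nat \<Rightarrow> nat \<Rightarrow> vtree set" where
  "views D n 0 = {Node d r [] | d r. d \<le> D \<and> r \<le> D}"
| "views D n (Suc t) = {Node d r cs | d r cs. d \<le> D \<and> r \<le> D \<and> length cs \<le> n \<and>
     set cs \<subseteq> {..<D} \<times> views D (D - 1) t}"

lemma nbview_in_views:
  assumes G: "wf_pgraph G" and D: "\<forall>v < nv G. deg G v \<le> D"
    and u: "u < nv G" and r: "r \<le> D" and n: "length [q \<leftarrow> [0..<deg G u]. q \<noteq> r] \<le> n"
  shows "nbview G t u r \<in> views D n t"
  using u r n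
proof (induction t arbitrary: u r n)
  case 0
  then show ?case using D by simp
next
  case (Suc t)
  have "(rport G u q, nbview G t (nbr G u q) (rport G u q)) \<in> {..<D} \<times> views D (D - 1) t"
    if q: "q < deg G u" for q
  proof -
    let ?w = "nbr G u q" and ?r = "rport G u q"
    have w: "?w < nv G" and r: "?r < deg G ?w"
      using wf_pgraph_nbr_less[OF G Suc.prems(1) q] rport_less[OF G Suc.prems(1) q] .
    have "length [p \<leftarrow> [0..<deg G ?w]. p \<noteq> ?r] < deg G ?w"
      using length_filter_less[of ?r "[0..<deg G ?w]"] r by simp
    then have "nbview G t ?w ?r \<in> views D (D - 1) t"
      using Suc.IH[OF w] r D w by fastforce
    then show ?thesis
      using r D w by fastforce
  qed
  then show ?case
    using Suc.prems D by auto
qed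

lemma view_in_views:
  "wf_pgraph G \<Longrightarrow> \<forall>v < nv G. deg G v \<le> D \<Longrightarrow> u < nv G \<Longrightarrow> view G t u \<in> views D D t"
  by (rule nbview_in_views) auto

lemma views_Suc_eq_image:
  "views D n (Suc t) = (\<lambda>((d, r), cs). Node d r cs) `
     (({..D} \<times> {..D}) \<times> {cs. set cs \<subseteq> {..<D} \<times> views D (D - 1) t \<and> length cs \<le> n})"
  by (auto simp: image_iff)

lemma views_0_eq_image: "views D n 0 = (\<lambda>(d, r). Node d r []) ` ({..D} \<times> {..D})"
  by (auto simp: image_iff)

lemma Node_0_in_views: "Node 0 0 [] \<in> views D n t"
  by (cases t) auto

lemma finite_views: "finite (views D n t)"
proof (induction t arbitrary: n)
  case 0
  then show ?case
    unfolding views_0_eq_image by simp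
next
  case (Suc t)
  then show ?case
    unfolding views_Suc_eq_image by (intro finite_imageI finite_cartesian_product finite_lists_length_le) auto
qed

lemma card_views_0: "card (views D n 0) \<le> (D + 1)^2"
  unfolding views_0_eq_image
  using card_image_le[of "{..D} \<times> {..D}" "\<lambda>(d, r). Node d r []"] by (simp add: power2_eq_square)

lemma card_views_Suc_le:
  assumes "1 \<le> D"
  shows "card (views D n (Suc t)) \<le> (D + 1)^2 * ((n + 1) * (D * card (views D (D - 1) t))^n)"
proof -
  let ?B = "{..<D} \<times> views D (D - 1) t"
  have B: "finite ?B" "card ?B = D * card (views D (D - 1) t)"
    by (simp_all add: finite_views card_cartesian_product)
  have "(0, Node 0 0 []) \<in> ?B"
    using assms Node_0_in_views by simp
  then have "1 \<le> card ?B"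
    using B(1) by (metis One_nat_def Suc_leI card_gt_0_iff empty_iff)
  have "card {cs. set cs \<subseteq> ?B \<and> length cs \<le> n} = (\<Sum>i\<le>n. card ?B ^ i)"
    by (rule card_lists_length_le[OF B(1)])
  also have "\<dots> \<le> (n + 1) * card ?B ^ n"
    using sum_bounded_above[of "{..n}" "\<lambda>i. card ?B ^ i" "card ?B ^ n"] \<open>1 \<le> card ?B\<close>
    by (simp add: power_increasing)
  finally have lists: "card {cs. set cs \<subseteq> ?B \<and> length cs \<le> n} \<le> (n + 1) * card ?B ^ n" .
  have "card (views D n (Suc t)) \<le> card (({..D} \<times> {..D}) \<times> {cs. set cs \<subseteq> ?B \<and> length cs \<le> n})"
    unfolding views_Suc_eq_image
    by (intro card_image_le finite_cartesian_product finite_lists_length_le) (simp_all add: finite_views)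
  also have "\<dots> = (D + 1)^2 * card {cs. set cs \<subseteq> ?B \<and> length cs \<le> n}"
    by (simp add: card_cartesian_product power2_eq_square)
  also have "\<dots> \<le> (D + 1)^2 * ((n + 1) * (D * card (views D (D - 1) t))^n)"
    using lists B(2) by simp
  finally show ?thesis .
qed

lemma Suc_square_le_cube: "3 \<le> D \<Longrightarrow> (D + 1)^2 \<le> (D::nat)^3"
proof -
  assume D: "3 \<le> D"
  have "3 * D \<le> D * D" "2 * (D * D) \<le> D * (D * D)"
    using mult_le_mono1[OF D, of D] mult_le_mono1[of 2 D "D * D"] D by simp_all
  moreover have "(D + 1)^2 = D * D + 2 * D + 1" "D^3 = D * (D * D)"
    by (simp_all add: power2_eq_square power3_eq_cube algebra_simps)
  ultimately show ?thesis
    using D by linarith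
qed

lemma card_views_Suc_le_power:
  assumes D: "3 \<le> D" and n: "n \<le> D" and e: "card (views D (D - 1) t) \<le> D ^ e"
  shows "card (views D n (Suc t)) \<le> D ^ (5 + n * (e + 1))"
proof -
  have "3 * D \<le> D * D"
    using mult_le_mono1[OF D, of D] .
  then have "n + 1 \<le> D^2"
    using n D unfolding power2_eq_square by linarith
  have "card (views D n (Suc t)) \<le> (D + 1)^2 * ((n + 1) * (D * card (views D (D - 1) t))^n)"
    using D by (intro card_views_Suc_le) simp
  also have "\<dots> \<le> D^3 * (D^2 * (D * D ^ e)^n)"
    using Suc_square_le_cube[OF D] \<open>n + 1 \<le> D^2\<close> e
    by (intro mult_le_mono mult_le_mono2 power_mono) simp_all
  also have "\<dots> = D ^ (5 + n * (e + 1))"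
  proof -
    have "D * D ^ e = D ^ (e + 1)"
      by simp
    then show ?thesis
      by (simp only: power_mult[symmetric] power_add[symmetric] mult.commute[of "e + 1" n]) simp
  qed
  finally show ?thesis .
qed

(* The exponents e_t satisfy e_(t+1) = 5 + (D - 1) (e_t + 1), whence e_t + 7 <= 10 (D - 1)^t
   as soon as D >= 3. *)
lemma card_views_le:
  assumes D: "3 \<le> D"
  shows "card (views D (D - 1) t) \<le> D ^ (10 * (D - 1)^t - 7)"
proof (induction t)
  case 0
  then show ?case
    using card_views_0[of D "D - 1"] Suc_square_le_cube[OF D] by simp
next
  case (Suc t)
  define m k where "m = D - 1" and "k = (D - 1)^t"
  have "2 \<le> m" "1 \<le> k"
    using D by (simp_all add: m_def k_def)
  then obtain i j where "m = i + 2" "k = j + 1"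
    using le_Suc_ex by (metis add.commute)
  then have exp: "5 + m * (10 * k - 7 + 1) \<le> 10 * (m * k) - 7"
    by (simp add: algebra_simps)
  have "card (views D (D - 1) (Suc t)) \<le> D ^ (5 + m * (10 * k - 7 + 1))"
    unfolding m_def k_def using D by (intro card_views_Suc_le_power Suc) simp_all
  also have "\<dots> \<le> D ^ (10 * (m * k) - 7)"
    using D exp by (intro power_increasing) simp_all
  also have "\<dots> = D ^ (10 * (D - 1)^Suc t - 7)"
    by (simp add: m_def k_def)
  finally show ?case .
qed

lemma card_views_root_le:
  assumes D: "3 \<le> D"
  shows "card (views D D t) \<le> D ^ (15 * (D - 1)^t)"
proof (cases t)
  case 0
  have "(D + 1)^2 \<le> D ^ 15"
    using order_trans[OF Suc_square_le_cube[OF D] power_increasing[of 3 15 D]] D by simp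
  then show ?thesis
    using card_views_0[of D D] 0 by simp
next
  case (Suc s)
  define m k where "m = D - 1" and "k = (D - 1)^s"
  have "2 \<le> m" "1 \<le> k" and Dm: "D = Suc m"
    using D by (simp_all add: m_def k_def)
  then obtain i j where "m = i + 2" "k = j + 1"
    using le_Suc_ex by (metis add.commute)
  then have exp: "5 + D * (10 * k - 7 + 1) \<le> 15 * (m * k)"
    unfolding Dm by (simp add: algebra_simps)
  have "card (views D D (Suc s)) \<le> D ^ (5 + D * (10 * k - 7 + 1))"
    unfolding k_def using D card_views_le[OF D] by (intro card_views_Suc_le_power) simp_all
  also have "\<dots> \<le> D ^ (15 * (m * k))"
    using D exp by (intro power_increasing) simp_all
  also have "\<dots> = D ^ (15 * (D - 1)^t)"
    by (simp add: Suc m_def k_def)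
  finally show ?thesis
    using Suc by simp
qed


section \<open>The advice\<close>

definition binary :: "nat \<Rightarrow> bool list" where
  "binary n = map (bit n) [0..<floorlog 2 n]"

lemma horner_sum_binary: "horner_sum of_bool 2 (binary n) = n"
proof (cases "n = 0")
  case False
  then have "n < 2 ^ floorlog 2 n" using floorlog_bounds[of n 2] by simp
  then show ?thesis unfolding binary_def horner_sum_bit_eq_take_bit by (rule take_bit_nat_eq_self)
qed (simp add: binary_def floorlog_def)

lemma length_binary_le: "0 < n \<Longrightarrow> real (length (binary n)) \<le> log 2 n + 1"
  by (simp add: binary_def floorlog_def)

lemma prod_encode_less_square: "prod_encode (a, b) < (a + b + 1)^2"
proof -
  have "triangle (a + b) \<le> (a + b) * (a + b + 1)"
    unfolding triangle_def by simp
  then show ?thesis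
    unfolding prod_encode_def by (simp add: power2_eq_square algebra_simps)
qed

lemma prod_encode_less: "a < B \<Longrightarrow> b < B \<Longrightarrow> prod_encode (a, b) < 4 * B^2"
  using prod_encode_less_square[of a b] power_strict_mono[of "a + b + 1" "2 * B" 2]
  by (simp add: power_mult_distrib)

lemma length_binary_prod_encode_le:
  assumes "a < B" "b < B" "c < B"
  shows "real (length (binary (prod_encode (a, prod_encode (b, c))))) \<le> 4 * log 2 B + 7"
proof -
  let ?N = "prod_encode (a, prod_encode (b, c))"
  have B: "1 \<le> B"
    using assms(1) by simp
  have "a < 4 * B^2"
    using assms(1) power_increasing[OF _ B, of 1 2] by simp
  then have "?N < 4 * (4 * B^2)^2"
    using prod_encode_less[OF assms(2,3)] by (rule prod_encode_less)
  then have N: "real ?N \<le> 2^6 * real B ^ 4"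
    by (simp add: power_mult_distrib flip: of_nat_power of_nat_le_iff power_mult)
  show ?thesis
  proof (cases "?N = 0")
    case True
    then show ?thesis
      using B by (simp add: binary_def floorlog_def)
  next
    case False
    then have "real (length (binary ?N)) \<le> log 2 ?N + 1"
      by (simp add: length_binary_le)
    also have "\<dots> \<le> log 2 (2^6 * real B ^ 4) + 1"
      using False N by (simp add: log_mono)
    also have "\<dots> = 4 * log 2 B + 7"
      using B log_pow_cancel[of 2 6] by (simp add: log_mult log_nat_power)
    finally show ?thesis .
  qed
qed

definition enum_views :: "nat \<Rightarrow> nat \<Rightarrow> nat \<Rightarrow> vtree" where
  "enum_views D T = (SOME f. bij_betw f {0..<card (views D D T)} (views D D T))"

lemma bij_enum_views: "bij_betw (enum_views D T) {0..<card (views D D T)} (views D D T)"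
  unfolding enum_views_def using ex_bij_betw_nat_finite[OF finite_views] by (rule someI_ex)

definition encode_advice :: "nat \<Rightarrow> nat \<Rightarrow> vtree \<Rightarrow> bool list" where
  "encode_advice D T x =
     binary (prod_encode (D, prod_encode (T, inv_into {0..<card (views D D T)} (enum_views D T) x)))"

definition decode_advice :: "bool list \<Rightarrow> nat \<times> vtree" where
  "decode_advice a = (case prod_decode (horner_sum of_bool 2 a) of (D, n) \<Rightarrow>
     (case prod_decode n of (T, i) \<Rightarrow> (T, enum_views D T i)))"

lemma decode_encode_advice: "x \<in> views D D T \<Longrightarrow> decode_advice (encode_advice D T x) = (T, x)"
  using bij_betw_inv_into_right[OF bij_enum_views]
  by (simp add: decode_advice_def encode_advice_def horner_sum_binary)

lemma length_encode_advice_le: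
  assumes D: "3 \<le> D" and x: "x \<in> views D D T"
  shows "real (length (encode_advice D T x)) \<le> 165 * (real D - 1)^T * log 2 D"
proof -
  define K where "K = 15 * (D - 1)^T"
  let ?i = "inv_into {0..<card (views D D T)} (enum_views D T) x"
  have "?i \<in> {0..<card (views D D T)}"
    using bij_enum_views x by (metis bij_betw_def inv_into_into)
  then have i: "?i < D^K"
    unfolding K_def using card_views_root_le[OF D, of T] by (simp only: atLeastLessThan_iff) linarith
  have "T < 2^T" "2^T \<le> (D - 1)^T" "(D - 1)^T \<le> K" "K < 2^K" "2^K \<le> D^K"
    using D by (simp_all add: K_def power_mono)
  then have T: "T < D^K"
    by linarith
  have "1 \<le> (D - 1)^T"
    using D by simp
  then have K: "1 < K"
    unfolding K_def by linarith
  then have "1 \<le> real K * log 2 D"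
    using D mult_mono[of 1 "real K" 1 "log 2 D"] by simp
  have "D^1 < D^K"
    using K D power_strict_increasing[of 1 K D] by simp
  then have "real (length (encode_advice D T x)) \<le> 4 * log 2 (D^K) + 7"
    unfolding encode_advice_def using T i by (intro length_binary_prod_encode_le) simp_all
  also have "\<dots> = 4 * K * log 2 D + 7"
    using D by (simp add: log_nat_power)
  also have "\<dots> \<le> 11 * K * log 2 D"
    using \<open>1 \<le> real K * log 2 D\<close> by simp
  also have "\<dots> = 165 * (real D - 1)^T * log 2 D"
    using D by (simp add: K_def)
  finally show ?thesis .
qed

definition sel_advice :: "pgraph \<Rightarrow> bool list" where
  "sel_advice G = encode_advice (maxdeg G) (sel_index G) (leader_view G)"

lemma leader_view_in_views:
  assumes "wf_pgraph G" and "\<exists>T. sel_solvable G T"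
  shows "leader_view G \<in> views (maxdeg G) (maxdeg G) (sel_index G)"
  using leader_view_unique[OF assms] view_in_views[OF assms(1)] deg_le_maxdeg by metis

theorem mainTheorem3:
  shows "\<exists>(orc :: pgraph \<Rightarrow> bool list) (A :: alg).
     (\<forall>G. wf_pgraph G \<and> (\<exists>T. sel_solvable G T) \<longrightarrow>
        solves_sel_in G A (orc G) (sel_index G)
        \<and> (\<forall>T < sel_index G. \<not> solves_sel_in G A (orc G) T))
   \<and> (\<exists>c :: real. \<forall>G. wf_pgraph G \<and> (\<exists>T. sel_solvable G T) \<and> maxdeg G \<ge> 3 \<longrightarrow>
        real (length (orc G)) \<le> c * (real (maxdeg G) - 1) ^ sel_index G * log 2 (real (maxdeg G)))"
proof (intro exI[of _ sel_advice] exI[of _ "view_alg decode_advice"] exI[of _ "165 :: real"]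
    conjI allI impI)
  fix G
  assume G: "wf_pgraph G \<and> (\<exists>T. sel_solvable G T)"
  have "decode_advice (sel_advice G) = (sel_index G, leader_view G)"
    unfolding sel_advice_def using leader_view_in_views G by (blast intro: decode_encode_advice)
  then show "solves_sel_in G (view_alg decode_advice) (sel_advice G) (sel_index G)"
    using leader_view_unique G by (blast intro: solves_sel_in_view_alg)
next
  fix G T
  assume "T < sel_index G"
  then show "\<not> solves_sel_in G (view_alg decode_advice) (sel_advice G) T"
    by (rule not_solves_sel_in_below_sel_index)
next
  fix G
  assume "wf_pgraph G \<and> (\<exists>T. sel_solvable G T) \<and> 3 \<le> maxdeg G"
  then show "real (length (sel_advice G))
      \<le> 165 * (real (maxdeg G) - 1) ^ sel_index G * log 2 (real (maxdeg G))"
    unfolding sel_advice_def using length_encode_advice_le leader_view_in_views by blast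
qed

end
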